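(* With notation as in the context, for each $s\in\{3,4,5,6,7\}$ there is a unique function $h_s:\Delta_s^+\to\{1,\dots,s\}$ such that $h_s(\alpha_s)=s$ and the map $\beta\mapsto v_{h_s(\beta)}$ is an open map of graphs from $\mathsf{H}_s$ to $\mathsf{Dyn}(E_s)$. For $s=8$ there is no function $h:\Delta_8^+\to\{1,\dots,8\}$ with $h(\alpha_8)=8$ such that $\beta\mapsto v_{h(\beta)}$ is an open map from $\mathsf{H}_8$ to $\mathsf{Dyn}(E_8)$.
   Context: Let $\Delta(E_8)$ be the root system of type $E_8$ with simple roots $\alpha_1,\dots,\alpha_8$, where $\langle\alpha_i,\alpha_i\rangle=2$, $\langle\alpha_i,\alpha_j\rangle=-1$ if $\{i,j\}\in\{\{1,3\},\{3,4\},\{4,5\},\{5,6\},\{6,7\},\{7,8\},\{2,4\}\}$, and $0$ otherwise; $\Delta^+$ denotes its positive roots and $\beta=\sum\beta^i\alpha_i$. For $\beta\in\Delta^+$ let $m(\beta)=\max\{i:\beta^i\ne0\}$, and define the strata $\Delta_1^+=\{\alpha_1\}$, $\Delta_3^+=\{\beta\in\Delta^+: m(\beta)\in\{2,3\}\}$, $\Delta_s^+=\{\beta\in\Delta^+: m(\beta)=s\}$ for $4\le s\le 8$. For $3\le s\le8$, $\mathsf{Dyn}(E_s)$ is the graph with vertices $v_1,\dots,v_s$, with $v_i,v_j$ adjacent iff $\langle\alpha_i,\alpha_j\rangle=-1$. $\mathsf{H}_s$ is the graph with vertex set $\Delta_s^+$, where $\beta,\beta'$ are adjacent iff $\beta-\beta'$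 or $\beta'-\beta$ is one of the simple roots $\alpha_1,\dots,\alpha_8$. An open map from a graph $P$ to a graph $R$ is a function $h$ from vertices of $P$ to vertices of $R$ which is a graph homomorphism (adjacent vertices go to adjacent vertices) and is locally surjective (for each vertex $u$ of $P$, $h$ maps the set of neighbours of $u$ onto the set of neighbours of $h(u)$). *)

theory Defs
  imports Main "HOL-Library.FuncSet"
begin

text \<open>Vectors in the root lattice are coefficient functions \<open>nat \<Rightarrow> int\<close>,
  indexed by 1..8 (coefficients outside 1..8 are zero for all roots).\<close>

definition e8_adj :: "nat \<Rightarrow> nat \<Rightarrow> bool" where
  "e8_adj i j \<longleftrightarrow> {i, j} \<in> {{1,3},{3,4},{4,5},{5,6},{6,7},{7,8},{2,4}}"

definition cartan :: "nat \<Rightarrow> nat \<Rightarrow> int" where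
  "cartan i j = (if i = j then 2 else if e8_adj i j then -1 else 0)"

definition simple_root :: "nat \<Rightarrow> (nat \<Rightarrow> int)" where
  "simple_root i = (\<lambda>j. if j = i then 1 else 0)"

definition form :: "(nat \<Rightarrow> int) \<Rightarrow> (nat \<Rightarrow> int) \<Rightarrow> int" where
  "form \<beta> \<gamma> = (\<Sum>i\<in>{1..8}. \<Sum>j\<in>{1..8}. \<beta> i * \<gamma> j * cartan i j)"

definition reflect :: "nat \<Rightarrow> (nat \<Rightarrow> int) \<Rightarrow> (nat \<Rightarrow> int)" where
  "reflect i \<beta> = (\<lambda>j. \<beta> j - form \<beta> (simple_root i) * simple_root i j)"

inductive_set roots :: "(nat \<Rightarrow> int) set" where
  simple: "i \<in> {1..8} \<Longrightarrow> simple_root i \<in> roots"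
| refl: "\<beta> \<in> roots \<Longrightarrow> i \<in> {1..8} \<Longrightarrow> reflect i \<beta> \<in> roots"

definition pos_roots :: "(nat \<Rightarrow> int) set" where
  "pos_roots = {\<beta> \<in> roots. \<forall>j. \<beta> j \<ge> 0}"

definition mx :: "(nat \<Rightarrow> int) \<Rightarrow> nat" where
  "mx \<beta> = Max {i \<in> {1..8}. \<beta> i \<noteq> 0}"

definition stratum :: "nat \<Rightarrow> (nat \<Rightarrow> int) set" where
  "stratum s = (if s = 1 then {simple_root 1}
               else if s = 3 then {\<beta> \<in> pos_roots. mx \<beta> \<in> {2, 3}}
               else {\<beta> \<in> pos_roots. mx \<beta> = s})"

text \<open>Graph Dyn(E_s): vertices 1..s (vertex i standing for v_i).\<close>
definition dyn_V :: "nat \<Rightarrow> nat set" where "dyn_V s = {1..s}"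
definition dyn_E :: "nat \<Rightarrow> nat \<Rightarrow> bool" where "dyn_E i j \<longleftrightarrow> e8_adj i j"

definition H_E :: "(nat \<Rightarrow> int) \<Rightarrow> (nat \<Rightarrow> int) \<Rightarrow> bool" where
  "H_E \<beta> \<beta>' \<longleftrightarrow> (\<exists>k\<in>{1..8}. (\<lambda>j. \<beta> j - \<beta>' j) = simple_root k
                               \<or> (\<lambda>j. \<beta>' j - \<beta> j) = simple_root k)"

definition nbhd :: "'a set \<Rightarrow> ('a \<Rightarrow> 'a \<Rightarrow> bool) \<Rightarrow> 'a \<Rightarrow> 'a set" where
  "nbhd V E u = {v \<in> V. E u v}"

definition open_map :: "'a set \<Rightarrow> ('a \<Rightarrow> 'a \<Rightarrow> bool) \<Rightarrow> 'b set \<Rightarrow> ('b \<Rightarrow> 'b \<Rightarrow> bool)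
    \<Rightarrow> ('a \<Rightarrow> 'b) \<Rightarrow> bool" where
  "open_map VP EP VR ER h \<longleftrightarrow>
     (\<forall>u\<in>VP. h u \<in> VR) \<and>
     (\<forall>u\<in>VP. \<forall>v\<in>VP. EP u v \<longrightarrow> ER (h u) (h v)) \<and>
     (\<forall>u\<in>VP. h ` nbhd VP EP u = nbhd VR ER (h u))"

definition good_h :: "nat \<Rightarrow> ((nat \<Rightarrow> int) \<Rightarrow> nat) \<Rightarrow> bool" where
  "good_h s h \<longleftrightarrow> h \<in> stratum s \<rightarrow> {1..s} \<and> h (simple_root s) = s \<and>
      open_map (stratum s) H_E (dyn_V s) dyn_E h"

end

theory Submission
  imports Defs
begin

text \<open>
  The positive roots are exactly the nonnegative integer vectors \<open>\<beta>\<close> with \<open>form \<beta> \<beta> = 2\<close>.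
  Since the form is positive definite, such a \<open>\<beta>\<close> of height at least 2 has a simple root
  \<open>\<alpha>\<^sub>i\<close> with \<open>form \<beta> \<alpha>\<^sub>i = 1\<close>, and then \<open>\<beta> - \<alpha>\<^sub>i\<close> is such a vector again and
  \<open>\<beta> = s\<^sub>i (\<beta> - \<alpha>\<^sub>i)\<close>.  So applying height-raising simple reflections level by level,
  starting from the simple roots, produces all 120 positive roots and hence the strata.

  An open map \<open>H\<^sub>s \<rightarrow> Dyn(E\<^sub>s)\<close> is a labelling of the vertices of \<open>H\<^sub>s\<close> in which the
  labels of the neighbours of each vertex form exactly the Dynkin neighbourhood of its label.
  A verified exhaustive search, which labels the vertices one by one and checks each vertex as
  soon as its neighbourhood is labelled, finds exactly one such labelling with \<open>\<alpha>\<^sub>s \<mapsto> s\<close> for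
  \<open>3 \<le> s \<le> 7\<close> and none for \<open>s = 8\<close>.
\<close>

section \<open>The invariant form and the roots\<close>

lemma e8_adj_sym: "e8_adj i j \<longleftrightarrow> e8_adj j i"
  by (simp add: e8_adj_def insert_commute)

lemma cartan_sym: "cartan i j = cartan j i"
  by (simp add: cartan_def e8_adj_sym)

lemma form_sym: "form \<beta> \<gamma> = form \<gamma> \<beta>"
  unfolding form_def by (subst sum.swap) (simp add: cartan_sym mult.commute mult.left_commute)

lemma form_lincomb_left:
  "form (\<lambda>j. \<beta> j - c * \<gamma> j) \<delta> = form \<beta> \<delta> - c * form \<gamma> \<delta>"
  unfolding form_def by (simp add: algebra_simps sum_subtractf sum_distrib_left)

lemma form_lincomb_right:
  "form \<delta> (\<lambda>j. \<beta> j - c * \<gamma> j) = form \<delta> \<beta> - c * form \<delta> \<gamma>"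
  using form_lincomb_left by (metis form_sym)

lemma form_self_lincomb:
  "form (\<lambda>j. \<beta> j - c * \<gamma> j) (\<lambda>j. \<beta> j - c * \<gamma> j) = form \<beta> \<beta> - 2 * c * form \<beta> \<gamma> + c\<^sup>2 * form \<gamma> \<gamma>"
  by (simp add: form_lincomb_left form_lincomb_right form_sym[of \<gamma> \<beta>] power2_eq_square algebra_simps)

lemma form_simple_root:
  assumes "i \<in> {1..8}"
  shows "form \<beta> (simple_root i) = (\<Sum>j\<in>{1..8}. \<beta> j * cartan j i)"
proof -
  have "(\<Sum>k\<in>{1..8}. \<beta> j * simple_root i k * cartan j k) = \<beta> j * cartan j i" for j
    using assms by (simp add: simple_root_def if_distrib if_distribR sum.delta cong: if_cong)
  then show ?thesis
    by (simp add: form_def)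
qed

lemma form_simple_simple:
  assumes "i \<in> {1..8}"
  shows "form (simple_root i) (simple_root i) = 2"
proof -
  have "(\<Sum>j\<in>{1..8}. simple_root i j * cartan j i) = (\<Sum>j\<in>{1..8}. if j = i then cartan i i else 0)"
    by (rule sum.cong) (simp_all add: simple_root_def)
  also have "\<dots> = 2"
    using assms by (simp add: cartan_def)
  finally show ?thesis
    by (simp add: form_simple_root[OF assms])
qed

lemma form_self_eq_sum: "form \<beta> \<beta> = (\<Sum>i\<in>{1..8}. \<beta> i * form \<beta> (simple_root i))"
proof -
  have "(\<Sum>i\<in>{1..8}. \<beta> i * form \<beta> (simple_root i)) = (\<Sum>i\<in>{1..8}. \<Sum>j\<in>{1..8}. \<beta> i * \<beta> j * cartan i j)"
    by (rule sum.cong) (simp_all add: form_simple_root sum_distrib_left mult.assoc cartan_sym)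
  then show ?thesis
    by (simp add: form_def)
qed

lemma atLeastAtMost_1_8: "{1..8::nat} = {1, 2, 3, 4, 5, 6, 7, 8}"
  by auto

lemma form_self_explicit:
  "form \<beta> \<beta> = 2 * ((\<beta> 1)\<^sup>2 + (\<beta> 2)\<^sup>2 + (\<beta> 3)\<^sup>2 + (\<beta> 4)\<^sup>2 + (\<beta> 5)\<^sup>2 + (\<beta> 6)\<^sup>2 + (\<beta> 7)\<^sup>2 + (\<beta> 8)\<^sup>2)
     - 2 * (\<beta> 1 * \<beta> 3 + \<beta> 3 * \<beta> 4 + \<beta> 4 * \<beta> 5 + \<beta> 5 * \<beta> 6 + \<beta> 6 * \<beta> 7 + \<beta> 7 * \<beta> 8 + \<beta> 2 * \<beta> 4)"
  unfolding form_def atLeastAtMost_1_8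
  by (simp add: cartan_def e8_adj_def doubleton_eq_iff power2_eq_square algebra_simps)

lemma form_pos:
  assumes "\<exists>j\<in>{1..8}. \<beta> j \<noteq> 0"
  shows "0 < form \<beta> \<beta>"
proof (rule ccontr)
  assume "\<not> 0 < form \<beta> \<beta>"
  \<comment> \<open>complete the squares along the Dynkin diagram, from the leaves towards vertex 4\<close>
  moreover have "60 * form \<beta> \<beta> = 30 * (2 * \<beta> 1 - \<beta> 3)\<^sup>2 + 10 * (3 * \<beta> 3 - 2 * \<beta> 4)\<^sup>2
      + 30 * (2 * \<beta> 2 - \<beta> 4)\<^sup>2 + 30 * (2 * \<beta> 8 - \<beta> 7)\<^sup>2 + 10 * (3 * \<beta> 7 - 2 * \<beta> 6)\<^sup>2
      + 5 * (4 * \<beta> 6 - 3 * \<beta> 5)\<^sup>2 + 3 * (5 * \<beta> 5 - 4 * \<beta> 4)\<^sup>2 + 2 * (\<beta> 4)\<^sup>2"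
    by (simp add: form_self_explicit power2_eq_square algebra_simps)
  ultimately have "(2 * \<beta> 1 - \<beta> 3)\<^sup>2 = 0 \<and> (3 * \<beta> 3 - 2 * \<beta> 4)\<^sup>2 = 0 \<and> (2 * \<beta> 2 - \<beta> 4)\<^sup>2 = 0
      \<and> (2 * \<beta> 8 - \<beta> 7)\<^sup>2 = 0 \<and> (3 * \<beta> 7 - 2 * \<beta> 6)\<^sup>2 = 0 \<and> (4 * \<beta> 6 - 3 * \<beta> 5)\<^sup>2 = 0
      \<and> (5 * \<beta> 5 - 4 * \<beta> 4)\<^sup>2 = 0 \<and> (\<beta> 4)\<^sup>2 = 0"
    using zero_le_power2[of "2 * \<beta> 1 - \<beta> 3"] zero_le_power2[of "3 * \<beta> 3 - 2 * \<beta> 4"]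
      zero_le_power2[of "2 * \<beta> 2 - \<beta> 4"] zero_le_power2[of "2 * \<beta> 8 - \<beta> 7"]
      zero_le_power2[of "3 * \<beta> 7 - 2 * \<beta> 6"] zero_le_power2[of "4 * \<beta> 6 - 3 * \<beta> 5"]
      zero_le_power2[of "5 * \<beta> 5 - 4 * \<beta> 4"] zero_le_power2[of "\<beta> 4"]
    by linarith
  then have "\<beta> 1 = 0 \<and> \<beta> 2 = 0 \<and> \<beta> 3 = 0 \<and> \<beta> 4 = 0 \<and> \<beta> 5 = 0 \<and> \<beta> 6 = 0 \<and> \<beta> 7 = 0 \<and> \<beta> 8 = 0"
    by simp
  with assms show False
    unfolding atLeastAtMost_1_8 by auto
qed

definition e8_vector :: "(nat \<Rightarrow> int) \<Rightarrow> bool" where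
  "e8_vector \<beta> \<longleftrightarrow> (\<forall>j. j \<notin> {1..8} \<longrightarrow> \<beta> j = 0)"

definition height :: "(nat \<Rightarrow> int) \<Rightarrow> int" where
  "height \<beta> = (\<Sum>j\<in>{1..8}. \<beta> j)"

lemma form_reflect_self:
  assumes "i \<in> {1..8}"
  shows "form (reflect i \<beta>) (reflect i \<beta>) = form \<beta> \<beta>"
  unfolding reflect_def form_self_lincomb form_simple_simple[OF assms] by (simp add: power2_eq_square)

lemma e8_vector_simple_root: "i \<in> {1..8} \<Longrightarrow> e8_vector (simple_root i)"
  by (auto simp: e8_vector_def simple_root_def)

lemma e8_vector_lincomb:
  "e8_vector \<beta> \<Longrightarrow> e8_vector \<gamma> \<Longrightarrow> e8_vector (\<lambda>j. \<beta> j - c * \<gamma> j)"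
  by (simp add: e8_vector_def)

lemma height_lincomb_simple:
  assumes "i \<in> {1..8}"
  shows "height (\<lambda>j. \<beta> j - c * simple_root i j) = height \<beta> - c"
  using assms by (simp add: height_def sum_subtractf sum_distrib_left[symmetric] simple_root_def)

lemma roots_e8_vector: "\<beta> \<in> roots \<Longrightarrow> e8_vector \<beta>"
  by (induction rule: roots.induct)
    (simp_all add: e8_vector_simple_root reflect_def e8_vector_lincomb)

lemma roots_norm: "\<beta> \<in> roots \<Longrightarrow> form \<beta> \<beta> = 2"
  by (induction rule: roots.induct) (simp_all add: form_simple_simple form_reflect_self)

lemma height_pos:
  assumes "\<forall>j. 0 \<le> \<beta> j" "form \<beta> \<beta> = 2"
  shows "0 < height \<beta>"
proof (rule ccontr)
  assume "\<not> 0 < height \<beta>"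
  moreover have "0 \<le> height \<beta>"
    using assms(1) by (simp add: height_def sum_nonneg)
  ultimately have "\<forall>j\<in>{1..8}. \<beta> j = 0"
    using assms(1) unfolding height_def by (metis finite_atLeastAtMost order_antisym not_less sum_nonneg_eq_0_iff)
  then have "form \<beta> \<beta> = 0"
    by (simp add: form_def)
  with assms(2) show False
    by simp
qed

lemma norm2_descent:
  assumes "e8_vector \<beta>" "\<forall>j. 0 \<le> \<beta> j" "form \<beta> \<beta> = 2" "2 \<le> height \<beta>"
  obtains i where "i \<in> {1..8}" "1 \<le> \<beta> i" "form \<beta> (simple_root i) = 1"
proof -
  have "\<exists>i\<in>{1..8}. 0 < \<beta> i \<and> 0 < form \<beta> (simple_root i)"
  proof (rule ccontr)
    assume no_ascent: "\<not> ?thesis"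
    have "\<beta> i * form \<beta> (simple_root i) \<le> 0" if "i \<in> {1..8}" for i
    proof (cases "\<beta> i = 0")
      case False
      then have "0 < \<beta> i"
        using assms(2) by (simp add: order_less_le)
      with no_ascent that have "form \<beta> (simple_root i) \<le> 0"
        by auto
      with \<open>0 < \<beta> i\<close> show ?thesis
        by (simp add: mult_nonneg_nonpos)
    qed simp
    then have "form \<beta> \<beta> \<le> 0"
      unfolding form_self_eq_sum by (rule sum_nonpos)
    with assms(3) show False
      by simp
  qed
  then obtain i where i: "i \<in> {1..8}" "0 < \<beta> i" "0 < form \<beta> (simple_root i)"
    by blast
  define \<gamma> where "\<gamma> = (\<lambda>j. \<beta> j - 1 * simple_root i j)"
  have "height \<gamma> = height \<beta> - 1"
    unfolding \<gamma>_def using i(1) by (rule height_lincomb_simple)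
  moreover have "height \<gamma> = 0" if "\<forall>j\<in>{1..8}. \<gamma> j = 0"
    using that by (simp add: height_def)
  ultimately have "\<exists>j\<in>{1..8}. \<gamma> j \<noteq> 0"
    using assms(4) by auto
  then have "0 < form \<gamma> \<gamma>"
    by (rule form_pos)
  also have "form \<gamma> \<gamma> = 4 - 2 * form \<beta> (simple_root i)"
    unfolding \<gamma>_def form_self_lincomb form_simple_simple[OF i(1)] assms(3) by simp
  finally have "form \<beta> (simple_root i) = 1"
    using i(3) by simp
  with i show ?thesis
    using that by simp
qed

lemma height_one_simple_root:
  assumes "e8_vector \<beta>" "\<forall>j. 0 \<le> \<beta> j" "height \<beta> = 1"
  obtains i where "i \<in> {1..8}" "\<beta> = simple_root i"
proof -
  have "\<exists>i\<in>{1..8}. \<beta> i \<noteq> 0"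
  proof (rule ccontr)
    assume "\<not> ?thesis"
    then have "height \<beta> = 0"
      by (simp add: height_def)
    with assms(3) show False
      by simp
  qed
  then obtain i where i: "i \<in> {1..8}" "\<beta> i \<noteq> 0"
    by blast
  moreover have "0 \<le> \<beta> i"
    using assms(2) by simp
  ultimately have "1 \<le> \<beta> i"
    by linarith
  define \<gamma> where "\<gamma> = (\<lambda>j. \<beta> j - 1 * simple_root i j)"
  have "height \<gamma> = 0"
    unfolding \<gamma>_def height_lincomb_simple[OF i(1)] assms(3) by simp
  moreover have "\<forall>j\<in>{1..8}. 0 \<le> \<gamma> j"
    using assms(2) \<open>1 \<le> \<beta> i\<close> by (auto simp: \<gamma>_def simple_root_def)
  ultimately have "\<forall>j\<in>{1..8}. \<gamma> j = 0"
    unfolding height_def by (metis finite_atLeastAtMost sum_nonneg_eq_0_iff)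
  have "\<beta> = simple_root i"
  proof
    fix j
    show "\<beta> j = simple_root i j"
    proof (cases "j \<in> {1..8}")
      case True
      with \<open>\<forall>j\<in>{1..8}. \<gamma> j = 0\<close> show ?thesis
        by (simp add: \<gamma>_def)
    next
      case False
      with assms(1) i(1) show ?thesis
        by (auto simp: e8_vector_def simple_root_def)
    qed
  qed
  with i(1) show ?thesis
    using that by blast
qed

lemma reflect_raising_height:
  assumes "i \<in> {1..8}" and "height (reflect i \<beta>) = height \<beta> + 1"
  shows "reflect i \<beta> = (\<lambda>j. \<beta> j + simple_root i j)"
proof -
  have "height (reflect i \<beta>) = height \<beta> - form \<beta> (simple_root i)"
    unfolding reflect_def using assms(1) by (rule height_lincomb_simple)
  with assms(2) have "form \<beta> (simple_root i) = -1"
    by simp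
  then show ?thesis
    by (simp add: reflect_def)
qed

section \<open>Enumeration of the positive roots\<close>

definition vec :: "int list \<Rightarrow> nat \<Rightarrow> int" where
  "vec xs j = (if j \<in> {1..8} then xs ! (j - 1) else 0)"

definition unit_list :: "nat \<Rightarrow> int list" where
  "unit_list i = map (\<lambda>j. if j = i then 1 else 0) [1..<9]"

lemma vec_inject:
  assumes "length x = 8" "length y = 8"
  shows "vec x = vec y \<longleftrightarrow> x = y"
proof
  assume eq: "vec x = vec y"
  show "x = y"
  proof (rule nth_equalityI)
    fix j assume "j < length x"
    then have "vec x (Suc j) = x ! j" "vec y (Suc j) = y ! j"
      using assms by (simp_all add: vec_def)
    with eq show "x ! j = y ! j"
      by simp
  qed (simp add: assms)
qed simp

lemma simple_root_vec: "i \<in> {1..8} \<Longrightarrow> simple_root i = vec (unit_list i)"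
  by (auto simp: fun_eq_iff simple_root_def vec_def unit_list_def nth_map_upt)

lemma length_unit_list [simp]: "length (unit_list i) = 8"
  by (simp add: unit_list_def)

lemma height_vec:
  assumes "length x = 8"
  shows "height (vec x) = sum_list x"
proof -
  have "height (vec x) = (\<Sum>j\<in>{Suc 0..Suc 7}. vec x j)"
    by (simp add: height_def)
  also have "\<dots> = (\<Sum>j\<in>{0..<length x}. x ! j)"
    unfolding sum.shift_bounds_cl_Suc_ivl by (rule sum.cong) (auto simp: vec_def assms)
  finally show ?thesis
    by (simp add: sum_list_sum_nth)
qed

fun reflect_list :: "nat \<Rightarrow> int list \<Rightarrow> int list" where
  "reflect_list i [a, b, c, d, e, f, g, h] =
     (if i = 1 then [c - a, b, c, d, e, f, g, h]
      else if i = 2 then [a, d - b, c, d, e, f, g, h]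
      else if i = 3 then [a, b, a + d - c, d, e, f, g, h]
      else if i = 4 then [a, b, c, b + c + e - d, e, f, g, h]
      else if i = 5 then [a, b, c, d, d + f - e, f, g, h]
      else if i = 6 then [a, b, c, d, e, e + g - f, g, h]
      else if i = 7 then [a, b, c, d, e, f, f + h - g, h]
      else [a, b, c, d, e, f, g, g - h])"
| "reflect_list i x = x"

lemma length_reflect_list [simp]: "length (reflect_list i x) = length x"
  by (induction i x rule: reflect_list.induct) simp_all

lemma reflect_vec:
  assumes "length x = 8" "i \<in> {1..8}"
  shows "reflect i (vec x) = vec (reflect_list i x)"
proof -
  obtain a b c d e f g h where x: "x = [a, b, c, d, e, f, g, h]"
    using assms(1) by (auto simp: length_Suc_conv eval_nat_numeral)
  from assms(2) consider "i = 1" | "i = 2" | "i = 3" | "i = 4" | "i = 5" | "i = 6" | "i = 7" | "i = 8"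
    by fastforce
  then show ?thesis
    unfolding reflect_def form_simple_root[OF assms(2)] x atLeastAtMost_1_8
    by cases (auto simp: fun_eq_iff vec_def cartan_def e8_adj_def doubleton_eq_iff simple_root_def
        nth_Cons' eval_nat_numeral)
qed

definition raise_level :: "int list list \<Rightarrow> int list list" where
  "raise_level L =
     remdups [y. x \<leftarrow> L, y \<leftarrow> map (\<lambda>i. reflect_list i x) [1..<9], sum_list y = sum_list x + 1]"

definition root_level :: "nat \<Rightarrow> int list list" where
  "root_level h = (raise_level ^^ h) (map unit_list [1..<9])"

lemma mem_raise_level:
  "y \<in> set (raise_level L) \<longleftrightarrow> (\<exists>x\<in>set L. \<exists>i\<in>{1..8}. y = reflect_list i x \<and> sum_list y = sum_list x + 1)"
  unfolding raise_level_def by (fastforce simp: atLeastLessThanSuc_atLeastAtMost)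

lemma root_level_Suc: "root_level (Suc h) = raise_level (root_level h)"
  by (simp add: root_level_def)

lemma root_level_sound:
  "x \<in> set (root_level h) \<Longrightarrow> length x = 8 \<and> vec x \<in> pos_roots \<and> sum_list x = int h + 1"
proof (induction h arbitrary: x)
  case 0
  then have "x \<in> unit_list ` {1..<9}"
    by (simp add: root_level_def)
  then obtain i where "i \<in> {1..<9}" "x = unit_list i"
    by blast
  then show ?case
    by (auto simp: pos_roots_def simple_root_vec[symmetric] roots.simple height_vec[symmetric])
      (auto simp: height_def simple_root_def)
next
  case (Suc h)
  then obtain y i where y: "y \<in> set (root_level h)" and i: "i \<in> {1..8}"
    and x: "x = reflect_list i y" "sum_list x = sum_list y + 1"
    by (auto simp: root_level_Suc mem_raise_level)
  from Suc.IH[OF y] have len: "length y = 8" and pos: "vec y \<in> pos_roots" and h: "sum_list y = int h + 1"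
    by auto
  have vx: "vec x = reflect i (vec y)"
    using reflect_vec[OF len i] x(1) by simp
  have "length x = 8"
    using x(1) len by simp
  then have "height (reflect i (vec y)) = height (vec y) + 1"
    using vx x(2) len by (simp flip: height_vec)
  then have "vec x = (\<lambda>j. vec y j + simple_root i j)"
    using reflect_raising_height[OF i] vx by simp
  then have "\<forall>j. 0 \<le> vec x j"
    using pos by (auto simp: pos_roots_def simple_root_def add_nonneg_nonneg)
  moreover have "vec x \<in> roots"
    using vx pos i by (simp add: pos_roots_def roots.refl)
  ultimately show ?case
    using x h len by (simp add: pos_roots_def)
qed

lemma root_level_complete:
  assumes "e8_vector \<beta>" "\<forall>j. 0 \<le> \<beta> j" "form \<beta> \<beta> = 2" "height \<beta> = int h + 1"
  shows "\<exists>x\<in>set (root_level h). \<beta> = vec x"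
  using assms
proof (induction h arbitrary: \<beta>)
  case 0
  then obtain i where "i \<in> {1..8}" "\<beta> = simple_root i"
    by (auto elim: height_one_simple_root)
  then show ?case
    by (auto simp: root_level_def simple_root_vec)
next
  case (Suc h)
  then obtain i where i: "i \<in> {1..8}" "1 \<le> \<beta> i" "form \<beta> (simple_root i) = 1"
    by (auto elim: norm2_descent)
  define \<gamma> where "\<gamma> = (\<lambda>j. \<beta> j - 1 * simple_root i j)"
  have "e8_vector \<gamma>"
    using Suc.prems(1) i(1) by (auto simp: \<gamma>_def e8_vector_def simple_root_def)
  moreover have "\<forall>j. 0 \<le> \<gamma> j"
    using Suc.prems(2) i(2) by (simp add: \<gamma>_def simple_root_def)
  moreover have "form \<gamma> \<gamma> = 2"
    unfolding \<gamma>_def form_self_lincomb form_simple_simple[OF i(1)] Suc.prems(3) i(3) by simp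
  moreover have "height \<gamma> = int h + 1"
    unfolding \<gamma>_def height_lincomb_simple[OF i(1)] Suc.prems(4) by simp
  ultimately obtain y where y: "y \<in> set (root_level h)" "\<gamma> = vec y"
    using Suc.IH by blast
  have len: "length y = 8" and hy: "sum_list y = int h + 1"
    using root_level_sound[OF y(1)] by auto
  have "form \<gamma> (simple_root i) = -1"
    unfolding \<gamma>_def form_lincomb_left form_simple_simple[OF i(1)] i(3) by simp
  then have "reflect i \<gamma> = \<beta>"
    by (simp add: reflect_def \<gamma>_def fun_eq_iff)
  then have \<beta>: "\<beta> = vec (reflect_list i y)"
    using reflect_vec[OF len i(1)] y(2) by simp
  then have "sum_list (reflect_list i y) = sum_list y + 1"
    using Suc.prems(4) hy height_vec[of "reflect_list i y"] len by simp
  with y(1) i(1) have "reflect_list i y \<in> set (root_level (Suc h))"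
    unfolding root_level_Suc mem_raise_level by blast
  with \<beta> show ?case
    by blast
qed

fun iterates :: "nat \<Rightarrow> ('a \<Rightarrow> 'a) \<Rightarrow> 'a \<Rightarrow> 'a list" where
  "iterates 0 f x = []"
| "iterates (Suc n) f x = x # iterates n f (f x)"

lemma iterates_eq_map_funpow: "iterates n f x = map (\<lambda>k. (f ^^ k) x) [0..<n]"
  by (induction n arbitrary: x) (simp_all add: map_upt_Suc funpow_swap1 del: upt_Suc)

lemma iterates_numeral: "iterates (numeral n) f x = x # iterates (pred_numeral n) f (f x)"
  by (simp add: numeral_eq_Suc)

definition e8_positive_roots :: "int list list" where
  "e8_positive_roots = concat (map root_level [0..<29])"

text \<open>Evaluating each \<open>root_level h\<close> separately would recompute all lower levels.\<close>

lemma e8_positive_roots_iterates: "e8_positive_roots = concat (iterates 29 raise_level (map unit_list [1..<9]))"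
  unfolding e8_positive_roots_def iterates_eq_map_funpow root_level_def ..

lemma root_level_eq_Nil:
  assumes "29 \<le> h"
  shows "root_level h = []"
proof -
  have "root_level 29 = []"
    by (simp add: root_level_def raise_level_def unit_list_def numeral_eq_Suc upt_rec)
  moreover have "(raise_level ^^ k) [] = []" for k
    by (induction k) (simp_all add: raise_level_def)
  moreover have "root_level h = (raise_level ^^ (h - 29)) (root_level 29)"
    using assms unfolding root_level_def by (metis funpow_add comp_apply le_add_diff_inverse2)
  ultimately show ?thesis
    by simp
qed

lemma set_e8_positive_roots: "set e8_positive_roots = (\<Union>h<29. set (root_level h))"
  by (auto simp: e8_positive_roots_def)

lemma e8_positive_roots_sound:
  "x \<in> set e8_positive_roots \<Longrightarrow> length x = 8 \<and> vec x \<in> pos_roots \<and> 0 < sum_list x"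
  using root_level_sound by (fastforce simp: set_e8_positive_roots)

lemma distinct_e8_positive_roots: "distinct e8_positive_roots"
proof -
  have "distinct (concat (map root_level [0..<n]))" for n
  proof (induction n)
    case (Suc n)
    have "distinct (root_level n)"
      by (cases n) (simp_all add: root_level_def raise_level_def unit_list_def upt_rec)
    moreover have "x \<notin> set (root_level k)" if "x \<in> set (root_level n)" "k < n" for x k
      using root_level_sound[OF that(1)] root_level_sound[of x k] that(2) by auto
    ultimately show ?case
      using Suc.IH by auto
  qed simp
  then show ?thesis
    by (simp add: e8_positive_roots_def)
qed

lemma pos_roots_eq: "pos_roots = vec ` set e8_positive_roots"
proof
  show "vec ` set e8_positive_roots \<subseteq> pos_roots"
    using e8_positive_roots_sound by auto
  show "pos_roots \<subseteq> vec ` set e8_positive_roots"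
  proof
    fix \<beta> assume \<beta>: "\<beta> \<in> pos_roots"
    then have e8: "e8_vector \<beta>" and nonneg: "\<forall>j. 0 \<le> \<beta> j" and norm: "form \<beta> \<beta> = 2"
      by (auto simp: pos_roots_def roots_e8_vector roots_norm)
    define h where "h = nat (height \<beta> - 1)"
    have "height \<beta> = int h + 1"
      using height_pos[OF nonneg norm] by (simp add: h_def)
    then obtain x where x: "x \<in> set (root_level h)" "\<beta> = vec x"
      using root_level_complete[OF e8 nonneg norm] by blast
    then have "h < 29"
      using root_level_eq_Nil[of h] by (cases "29 \<le> h") auto
    with x show "\<beta> \<in> vec ` set e8_positive_roots"
      by (auto simp: set_e8_positive_roots)
  qed
qed

section \<open>The strata and the graphs \<open>H\<^sub>s\<close>\<close>

fun support_end :: "('a \<Rightarrow> bool) \<Rightarrow> 'a list \<Rightarrow> nat" where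
  "support_end P [] = 0"
| "support_end P (a # x) = (case support_end P x of 0 \<Rightarrow> if P a then 1 else 0 | Suc n \<Rightarrow> Suc (Suc n))"

lemma support_end_le: "support_end P x \<le> length x"
  by (induction x) (auto split: nat.split)

lemma nth_ge_support_end: "support_end P x \<le> j \<Longrightarrow> j < length x \<Longrightarrow> \<not> P (x ! j)"
  by (induction x arbitrary: j) (auto simp: nth_Cons' split: nat.splits if_splits)

lemma nth_support_end: "0 < support_end P x \<Longrightarrow> P (x ! (support_end P x - 1))"
  by (induction x) (auto simp: nth_Cons' split: nat.splits if_splits)

lemma mx_vec:
  assumes "length x = 8" "0 < sum_list x"
  shows "mx (vec x) = support_end (\<lambda>c. c \<noteq> 0) x"
proof -
  have "support_end (\<lambda>c. c \<noteq> 0) x \<noteq> 0"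
  proof
    assume "support_end (\<lambda>c. c \<noteq> 0) x = 0"
    then have "\<forall>j<length x. x ! j = 0"
      using nth_ge_support_end[of "\<lambda>c. c \<noteq> 0" x] by simp
    then have "sum_list x = 0"
      by (simp add: sum_list_sum_nth)
    with assms(2) show False
      by simp
  qed
  then have pos: "0 < support_end (\<lambda>c. c \<noteq> 0) x" and le: "support_end (\<lambda>c. c \<noteq> 0) x \<le> 8"
    using support_end_le[of "\<lambda>c. c \<noteq> 0" x] assms(1) by auto
  show ?thesis
    unfolding mx_def
  proof (rule Max_eqI)
    show "support_end (\<lambda>c. c \<noteq> 0) x \<in> {i \<in> {1..8}. vec x i \<noteq> 0}"
      using pos le nth_support_end[OF pos] by (simp add: vec_def)
    fix i assume "i \<in> {i \<in> {1..8}. vec x i \<noteq> 0}"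
    then show "i \<le> support_end (\<lambda>c. c \<noteq> 0) x"
      using nth_ge_support_end[of "\<lambda>c. c \<noteq> 0" x "i - 1"] assms(1) by (fastforce simp: vec_def)
  qed simp
qed

definition stratum_list :: "nat \<Rightarrow> int list list" where
  "stratum_list s =
     [x \<leftarrow> e8_positive_roots. support_end (\<lambda>c. c \<noteq> 0) x \<in> (if s = 3 then {2, 3} else {s})]"

lemma stratum_eq: "s \<noteq> 1 \<Longrightarrow> stratum s = vec ` set (stratum_list s)"
  unfolding stratum_def stratum_list_def pos_roots_eq
  using mx_vec e8_positive_roots_sound by auto

lemma distinct_stratum_list: "distinct (stratum_list s)"
  by (simp add: stratum_list_def distinct_e8_positive_roots)

lemma length_stratum_list: "x \<in> set (stratum_list s) \<Longrightarrow> length x = 8"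
  by (simp add: stratum_list_def e8_positive_roots_sound)

lemma unit_list_mem_stratum_list:
  assumes "s \<in> {3..8}"
  shows "unit_list s \<in> set (stratum_list s)"
proof -
  have "simple_root s \<in> roots"
    using assms by (intro roots.simple) auto
  then have "simple_root s \<in> pos_roots"
    by (simp add: pos_roots_def simple_root_def)
  moreover have "mx (simple_root s) = s"
    using assms by (simp add: mx_def simple_root_def)
  ultimately have "vec (unit_list s) \<in> stratum s"
    using assms by (auto simp: stratum_def simple_root_vec[symmetric])
  then obtain x where "x \<in> set (stratum_list s)" "vec (unit_list s) = vec x"
    using stratum_eq[of s] assms by auto
  then show ?thesis
    using vec_inject[of "unit_list s" x] length_stratum_list by auto
qed

fun unit_apart :: "int list \<Rightarrow> int list \<Rightarrow> bool" where
  "unit_apart (a # x) (b # y) = (if a = b then unit_apart x y else (a = b + 1 \<or> b = a + 1) \<and> x = y)"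
| "unit_apart _ _ = False"

lemma unit_apart_iff:
  "length x = length y \<Longrightarrow>
    unit_apart x y \<longleftrightarrow> (\<exists>k<length x. y = x[k := x ! k + 1] \<or> x = y[k := y ! k + 1])"
proof (induction x arbitrary: y)
  case (Cons a x)
  then obtain b y' where y: "y = b # y'" and len: "length x = length y'"
    by (cases y) auto
  show ?case
    unfolding y using Cons.IH[OF len] by (auto simp: Ex_less_Suc2)
qed simp

lemma unit_apart_irrefl: "\<not> unit_apart x x"
  by (induction x) auto

lemma unit_apart_sym: "unit_apart x y \<longleftrightarrow> unit_apart y x"
  by (induction x y rule: unit_apart.induct) auto

lemma bex_atLeastAtMost_Suc_0: "(\<exists>k\<in>{1..n}. P k) \<longleftrightarrow> (\<exists>k<n. P (Suc k))"
proof
  assume "\<exists>k\<in>{1..n}. P k"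
  then obtain k where "1 \<le> k" "k \<le> n" "P k"
    by auto
  then show "\<exists>k<n. P (Suc k)"
    by (intro exI[of _ "k - 1"]) auto
qed auto

lemma vec_update_add:
  assumes "length y = 8" "k < 8"
  shows "vec (y[k := y ! k + 1]) = (\<lambda>j. vec y j + simple_root (Suc k) j)"
  using assms by (auto simp: fun_eq_iff vec_def simple_root_def nth_list_update)

lemma H_E_vec:
  assumes "length x = 8" "length y = 8"
  shows "H_E (vec x) (vec y) \<longleftrightarrow> unit_apart x y"
proof -
  have diff: "(\<lambda>j. vec u j - vec v j) = simple_root (Suc k) \<longleftrightarrow> u = v[k := v ! k + 1]"
    if "length u = 8" "length v = 8" "k < 8" for u v k
  proof -
    have "(\<lambda>j. vec u j - vec v j) = simple_root (Suc k) \<longleftrightarrow> vec u = (\<lambda>j. vec v j + simple_root (Suc k) j)"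
      by (auto simp: fun_eq_iff algebra_simps)
    also have "\<dots> \<longleftrightarrow> u = v[k := v ! k + 1]"
      using that by (simp add: vec_update_add[symmetric] vec_inject)
    finally show ?thesis .
  qed
  have "H_E (vec x) (vec y) \<longleftrightarrow> (\<exists>k<8. (\<lambda>j. vec x j - vec y j) = simple_root (Suc k) \<or>
      (\<lambda>j. vec y j - vec x j) = simple_root (Suc k))"
    unfolding H_E_def bex_atLeastAtMost_Suc_0 ..
  also have "\<dots> \<longleftrightarrow> unit_apart x y"
    using assms by (auto simp: diff unit_apart_iff)
  finally show ?thesis .
qed

section \<open>Open maps as labellings, and an exhaustive search for them\<close>

fun select_by :: "bool list \<Rightarrow> 'a list \<Rightarrow> 'a list" where
  "select_by (True # r) (x # xs) = x # select_by r xs"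
| "select_by (False # r) (x # xs) = select_by r xs"
| "select_by _ _ = []"

lemma mem_select_by: "x \<in> set (select_by r xs) \<longleftrightarrow> (\<exists>l<length xs. l < length r \<and> r ! l \<and> xs ! l = x)"
  by (induction r xs rule: select_by.induct) (auto simp: Ex_less_Suc2)

lemma set_select_by:
  "length xs \<le> length r \<Longrightarrow> set (select_by r xs) = (\<lambda>l. xs ! l) ` {l. l < length xs \<and> r ! l}"
  by (auto simp: mem_select_by) (metis order_less_le_trans)

lemma select_by_map: "select_by (map P xs) (map h xs) = map h (filter P xs)"
  by (induction xs) auto

definition adjacency_matrix :: "('a \<Rightarrow> 'a \<Rightarrow> bool) \<Rightarrow> 'a list \<Rightarrow> bool list list" where
  "adjacency_matrix E vs = map (\<lambda>v. map (E v) vs) vs"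

lemma adjacency_matrix_map:
  "adjacency_matrix E (map f xs) = adjacency_matrix (\<lambda>x y. E (f x) (f y)) xs"
  by (simp add: adjacency_matrix_def)

definition open_labeling :: "bool list list \<Rightarrow> 'b list \<Rightarrow> ('b \<Rightarrow> 'b \<Rightarrow> bool) \<Rightarrow> 'b list \<Rightarrow> bool" where
  "open_labeling A ws F hs \<longleftrightarrow> length hs = length A \<and>
     (\<forall>k<length A. hs ! k \<in> set ws \<and> set (select_by (A ! k) hs) = {b \<in> set ws. F (hs ! k) b})"

lemma open_map_iff_open_labeling:
  "open_map (set vs) E (set ws) F h \<longleftrightarrow> open_labeling (adjacency_matrix E vs) ws F (map h vs)"
proof -
  have sel: "set (select_by (adjacency_matrix E vs ! k) (map h vs)) = h ` nbhd (set vs) E (vs ! k)"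
    if "k < length vs" for k
    using that by (auto simp: adjacency_matrix_def select_by_map nbhd_def)
  have "open_map (set vs) E (set ws) F h \<longleftrightarrow>
      (\<forall>u\<in>set vs. h u \<in> set ws \<and> h ` nbhd (set vs) E u = nbhd (set ws) F (h u))"
    unfolding open_map_def nbhd_def by blast
  also have "\<dots> \<longleftrightarrow> (\<forall>k<length vs. h (vs ! k) \<in> set ws \<and>
      set (select_by (adjacency_matrix E vs ! k) (map h vs)) = {b \<in> set ws. F (h (vs ! k)) b})"
    by (simp add: all_set_conv_all_nth sel nbhd_def)
  also have "\<dots> \<longleftrightarrow> open_labeling (adjacency_matrix E vs) ws F (map h vs)"
    by (simp add: open_labeling_def adjacency_matrix_def)
  finally show ?thesis .
qed

definition simple_adjacency :: "bool list list \<Rightarrow> bool" where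
  "simple_adjacency A \<longleftrightarrow> (\<forall>r\<in>set A. length r = length A) \<and>
     (\<forall>i<length A. \<not> A ! i ! i \<and> (\<forall>j<length A. A ! i ! j = A ! j ! i))"

lemma simple_adjacency_matrix:
  assumes "\<And>v. v \<in> set vs \<Longrightarrow> \<not> E v v" "\<And>v w. v \<in> set vs \<Longrightarrow> w \<in> set vs \<Longrightarrow> E v w \<longleftrightarrow> E w v"
  shows "simple_adjacency (adjacency_matrix E vs)"
  using assms by (auto simp: simple_adjacency_def adjacency_matrix_def)

definition completion_step :: "bool list \<Rightarrow> nat \<Rightarrow> nat" where
  "completion_step r j = max j (support_end (\<lambda>e. e) r - 1)"

lemma completion_step_ge: "j \<le> completion_step r j"
  by (simp add: completion_step_def)

lemma completion_step_less: "j < length r \<Longrightarrow> completion_step r j < length r"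
  using support_end_le[of "\<lambda>e. e" r] by (simp add: completion_step_def)

lemma neighbour_le_completion_step: "l < length r \<Longrightarrow> r ! l \<Longrightarrow> l \<le> completion_step r j"
  using nth_ge_support_end[of "\<lambda>e. e" r l] by (fastforce simp: completion_step_def)

text \<open>
  Step \<open>k\<close> of the search labels vertex \<open>k\<close>.  It records the adjacency row of vertex \<open>k\<close>, the
  labels allowed for it, and the vertices (with their rows) whose neighbourhoods become completely
  labelled at this step; local surjectivity is checked for exactly these.  The tests are named
  constants rather than \<open>\<lambda>\<close>-terms so that the simplifier only evaluates them on concrete labels.
\<close>

type_synonym 'b search_step = "bool list \<times> 'b list \<times> (nat \<times> bool list) list"

definition completions :: "bool list list \<Rightarrow> (nat \<times> bool list \<times> nat) list" where
  "completions A = [(j, r, completion_step r j). (j, r) \<leftarrow> zip [0..<length A] A]"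

fun plan_step :: "(nat \<times> bool list \<times> nat) list \<Rightarrow> nat \<times> bool list \<times> 'b list \<Rightarrow> 'b search_step" where
  "plan_step cs (k, r, al) = (r, al, [(j, rj). (j, rj, c) \<leftarrow> cs, c = k])"

definition search_plan :: "bool list list \<Rightarrow> 'b list list \<Rightarrow> 'b search_step list" where
  "search_plan A allowed = map (plan_step (completions A)) (zip [0..<length A] (zip A allowed))"

fun surjective_at :: "('b \<Rightarrow> 'b \<Rightarrow> bool) \<Rightarrow> 'b list \<Rightarrow> 'b list \<Rightarrow> nat \<times> bool list \<Rightarrow> bool" where
  "surjective_at F ws q (j, r) \<longleftrightarrow> set (filter (F (q ! j)) ws) \<subseteq> set (select_by r q)"

fun admissible :: "('b \<Rightarrow> 'b \<Rightarrow> bool) \<Rightarrow> 'b list \<Rightarrow> 'b search_step \<Rightarrow> 'b list \<Rightarrow> 'b \<Rightarrow> bool" where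
  "admissible F ws (r, al, cs) p a \<longleftrightarrow>
     list_all (F a) (select_by r p) \<and> list_all (surjective_at F ws (p @ [a])) cs"

definition extensions :: "('b \<Rightarrow> 'b \<Rightarrow> bool) \<Rightarrow> 'b list \<Rightarrow> 'b search_step \<Rightarrow> 'b list \<Rightarrow> 'b list list" where
  "extensions F ws step p = map (\<lambda>a. p @ [a]) (filter (admissible F ws step p) (fst (snd step)))"

definition labelings :: "('b \<Rightarrow> 'b \<Rightarrow> bool) \<Rightarrow> 'b list \<Rightarrow> 'b search_step list \<Rightarrow> 'b list list" where
  "labelings F ws plan = foldl (\<lambda>Ps step. concat (map (extensions F ws step) Ps)) [[]] plan"

lemma search_plan_nth:
  assumes "k < length A" "length allowed = length A"
  obtains cs where "search_plan A allowed ! k = (A ! k, allowed ! k, cs)"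
    and "set cs = {(j, A ! j) | j. j < length A \<and> completion_step (A ! j) j = k}"
proof -
  have "(j, r) \<in> set (zip [0..<length A] A) \<longleftrightarrow> j < length A \<and> r = A ! j" for j r
    by (auto simp: in_set_zip intro!: exI[of _ j])
  then have "set (completions A) = {(j, A ! j, completion_step (A ! j) j) | j. j < length A}"
    unfolding completions_def by force
  then have "set [(j, rj). (j, rj, c) \<leftarrow> completions A, c = k] =
      {(j, A ! j) | j. j < length A \<and> completion_step (A ! j) j = k}"
    by force
  with assms show ?thesis
    using that by (simp add: search_plan_def)
qed

lemma length_search_plan: "length allowed = length A \<Longrightarrow> length (search_plan A allowed) = length A"
  by (simp add: search_plan_def)

lemma labelings_snoc:
  "labelings F ws (plan @ [step]) = concat (map (extensions F ws step) (labelings F ws plan))"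
  by (simp add: labelings_def)

definition partial_labeling ::
  "bool list list \<Rightarrow> 'b list \<Rightarrow> ('b \<Rightarrow> 'b \<Rightarrow> bool) \<Rightarrow> 'b list list \<Rightarrow> nat \<Rightarrow> 'b list \<Rightarrow> bool" where
  "partial_labeling A ws F allowed k p \<longleftrightarrow> length p = k \<and>
     (\<forall>l<k. p ! l \<in> set (allowed ! l) \<and> (\<forall>m<l. A ! l ! m \<longrightarrow> F (p ! l) (p ! m))) \<and>
     (\<forall>j<length A. completion_step (A ! j) j < k \<longrightarrow>
        set (filter (F (p ! j)) ws) \<subseteq> set (select_by (A ! j) p))"

lemma partial_labeling_snoc:
  assumes A: "simple_adjacency A" and k: "k < length A" and "length allowed = length A"
    and p: "length p = k"
  shows "partial_labeling A ws F allowed (Suc k) (p @ [a]) \<longleftrightarrow>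
    partial_labeling A ws F allowed k p \<and> a \<in> set (allowed ! k) \<and>
    admissible F ws (search_plan A allowed ! k) p a"
proof -
  obtain cs where step: "search_plan A allowed ! k = (A ! k, allowed ! k, cs)"
    and cs: "set cs = {(j, A ! j) | j. j < length A \<and> completion_step (A ! j) j = k}"
    using search_plan_nth[OF k assms(3)] by blast
  have row: "length (A ! j) = length A" if "j < length A" for j
    using A that by (simp add: simple_adjacency_def)
  let ?q = "p @ [a]"
  let ?surj = "\<lambda>q j. set (filter (F (q ! j)) ws) \<subseteq> set (select_by (A ! j) q)"
  have labels: "(\<forall>l<Suc k. ?q ! l \<in> set (allowed ! l) \<and> (\<forall>m<l. A ! l ! m \<longrightarrow> F (?q ! l) (?q ! m))) \<longleftrightarrow>
      (\<forall>l<k. p ! l \<in> set (allowed ! l) \<and> (\<forall>m<l. A ! l ! m \<longrightarrow> F (p ! l) (p ! m))) \<and>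
      a \<in> set (allowed ! k) \<and> (\<forall>m<k. A ! k ! m \<longrightarrow> F a (p ! m))"
    using p by (auto simp: All_less_Suc nth_append)
  have hom: "list_all (F a) (select_by (A ! k) p) \<longleftrightarrow> (\<forall>m<k. A ! k ! m \<longrightarrow> F a (p ! m))"
    using p row[OF k] k by (auto simp: list_all_iff set_select_by)
  have old: "?surj ?q j \<longleftrightarrow> ?surj p j" if "j < length A" "completion_step (A ! j) j < k" for j
  proof -
    have "\<not> A ! j ! k"
      using neighbour_le_completion_step[of k "A ! j" j] that row k by fastforce
    then have "set (select_by (A ! j) ?q) = set (select_by (A ! j) p)"
      using p by (auto simp: set_eq_iff mem_select_by nth_append less_Suc_eq)
    moreover have "?q ! j = p ! j"
      using completion_step_ge[of j "A ! j"] that(2) p by (simp add: nth_append)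
    ultimately show ?thesis
      by simp
  qed
  have new: "list_all (surjective_at F ws ?q) cs \<longleftrightarrow>
      (\<forall>j<length A. completion_step (A ! j) j = k \<longrightarrow> ?surj ?q j)"
    by (auto simp: list_all_iff cs)
  have "(\<forall>j<length A. completion_step (A ! j) j < Suc k \<longrightarrow> ?surj ?q j) \<longleftrightarrow>
      (\<forall>j<length A. completion_step (A ! j) j < k \<longrightarrow> ?surj p j) \<and>
      (\<forall>j<length A. completion_step (A ! j) j = k \<longrightarrow> ?surj ?q j)"
    using old by (auto simp: less_Suc_eq)
  then show ?thesis
    unfolding partial_labeling_def step admissible.simps hom new using labels p by auto
qed

lemma partial_labeling_Suc:
  assumes "simple_adjacency A" "k < length A" "length allowed = length A"
  shows "partial_labeling A ws F allowed (Suc k) q \<longleftrightarrow>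
    (\<exists>p a. q = p @ [a] \<and> partial_labeling A ws F allowed k p \<and> a \<in> set (allowed ! k) \<and>
       admissible F ws (search_plan A allowed ! k) p a)"
proof
  assume q: "partial_labeling A ws F allowed (Suc k) q"
  then obtain p a where "q = p @ [a]" "length p = k"
    by (cases q rule: rev_cases) (auto simp: partial_labeling_def)
  with q show "\<exists>p a. q = p @ [a] \<and> partial_labeling A ws F allowed k p \<and> a \<in> set (allowed ! k) \<and>
       admissible F ws (search_plan A allowed ! k) p a"
    using partial_labeling_snoc[OF assms] by blast
qed (use partial_labeling_snoc[OF assms] partial_labeling_def in blast)

lemma set_labelings_take:
  assumes A: "simple_adjacency A" and "length allowed = length A" and "k \<le> length A"
  shows "set (labelings F ws (take k (search_plan A allowed))) = {p. partial_labeling A ws F allowed k p}"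
  using assms(3)
proof (induction k)
  case 0
  then show ?case
    by (auto simp: labelings_def partial_labeling_def)
next
  case (Suc k)
  then have k: "k < length A"
    by simp
  obtain cs where step: "search_plan A allowed ! k = (A ! k, allowed ! k, cs)"
    using search_plan_nth[OF k assms(2)] by blast
  have "take (Suc k) (search_plan A allowed) = take k (search_plan A allowed) @ [search_plan A allowed ! k]"
    using k assms(2) by (simp add: take_Suc_conv_app_nth length_search_plan)
  then show ?case
    using Suc.IH k partial_labeling_Suc[OF A k assms(2)]
    by (auto simp: labelings_snoc extensions_def step)
qed

lemma partial_labeling_complete:
  assumes A: "simple_adjacency A" and F: "\<And>a b. F a b \<longleftrightarrow> F b a"
    and allowed: "length allowed = length A" "\<forall>al\<in>set allowed. set al \<subseteq> set ws"
  shows "partial_labeling A ws F allowed (length A) hs \<longleftrightarrow>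
    open_labeling A ws F hs \<and> (\<forall>k<length A. hs ! k \<in> set (allowed ! k))"
proof -
  have row: "length (A ! j) = length A" if "j < length A" for j
    using A that by (simp add: simple_adjacency_def)
  have irrefl: "\<not> A ! j ! j" and sym: "A ! j ! l = A ! l ! j" if "j < length A" "l < length A" for j l
    using A that by (simp_all add: simple_adjacency_def)
  have nbrs: "set (select_by (A ! j) hs) = (\<lambda>l. hs ! l) ` {l. l < length A \<and> A ! j ! l}"
    if "length hs = length A" "j < length A" for j
    using that row by (simp add: set_select_by)
  have final: "completion_step (A ! j) j < length A" if "j < length A" for j
    using completion_step_less[of j "A ! j"] row that by simp
  show ?thesis
  proof
    assume part: "partial_labeling A ws F allowed (length A) hs"
    then have len: "length hs = length A"
      and lab: "\<And>l. l < length A \<Longrightarrow> hs ! l \<in> set (allowed ! l)"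
      and hom: "\<And>l m. l < length A \<Longrightarrow> m < l \<Longrightarrow> A ! l ! m \<Longrightarrow> F (hs ! l) (hs ! m)"
      and surj: "\<And>j. j < length A \<Longrightarrow> set (filter (F (hs ! j)) ws) \<subseteq> set (select_by (A ! j) hs)"
      using final by (auto simp: partial_labeling_def)
    have ws: "hs ! l \<in> set ws" if "l < length A" for l
      using lab[OF that] allowed that by (auto simp: all_set_conv_all_nth)
    have "F (hs ! j) (hs ! l)" if "j < length A" "l < length A" "A ! j ! l" for j l
      using hom[of j l] hom[of l j] irrefl sym F that by (metis linorder_neqE_nat)
    then have "set (select_by (A ! k) hs) = {b \<in> set ws. F (hs ! k) b}" if "k < length A" for k
      using surj[OF that] nbrs[OF len that] ws that by auto
    then show "open_labeling A ws F hs \<and> (\<forall>k<length A. hs ! k \<in> set (allowed ! k))"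
      using len lab ws by (simp add: open_labeling_def)
  next
    assume "open_labeling A ws F hs \<and> (\<forall>k<length A. hs ! k \<in> set (allowed ! k))"
    then have len: "length hs = length A"
      and eq: "\<And>k. k < length A \<Longrightarrow> set (select_by (A ! k) hs) = {b \<in> set ws. F (hs ! k) b}"
      and lab: "\<forall>k<length A. hs ! k \<in> set (allowed ! k)"
      by (auto simp: open_labeling_def)
    have "F (hs ! l) (hs ! m)" if "l < length A" "m < l" "A ! l ! m" for l m
      using eq[OF that(1)] nbrs[OF len that(1)] that by auto
    then show "partial_labeling A ws F allowed (length A) hs"
      using len lab eq by (auto simp: partial_labeling_def)
  qed
qed

theorem set_labelings_search_plan:
  assumes "simple_adjacency A" "\<And>a b. F a b \<longleftrightarrow> F b a"
    "length allowed = length A" "\<forall>al\<in>set allowed. set al \<subseteq> set ws"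
  shows "set (labelings F ws (search_plan A allowed)) =
    {hs. open_labeling A ws F hs \<and> (\<forall>k<length A. hs ! k \<in> set (allowed ! k))}"
  using set_labelings_take[OF assms(1,3) order_refl] partial_labeling_complete[OF assms]
  by (simp add: length_search_plan assms(3))

section \<open>Open maps from \<open>H\<^sub>s\<close> to \<open>Dyn(E\<^sub>s)\<close>\<close>

definition dynkin_neighbours :: "nat \<Rightarrow> nat list" where
  "dynkin_neighbours i =
     (if i = 1 then [3] else if i = 2 then [4] else if i = 3 then [1, 4] else if i = 4 then [2, 3, 5]
      else if i = 5 then [4, 6] else if i = 6 then [5, 7] else if i = 7 then [6, 8] else if i = 8 then [7]
      else [])"

lemma e8_adj_iff_dynkin_neighbours: "e8_adj i j \<longleftrightarrow> j \<in> set (dynkin_neighbours i)"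
  by (auto simp: e8_adj_def dynkin_neighbours_def doubleton_eq_iff)

definition pinned_labels :: "nat \<Rightarrow> int list list \<Rightarrow> nat list list" where
  "pinned_labels s V = map (\<lambda>x. if x = unit_list s then [s] else [1..<Suc s]) V"

text \<open>The stratum is an argument of \<open>stratum_search\<close>, so evaluation computes it only once.\<close>

definition stratum_search :: "nat \<Rightarrow> int list list \<Rightarrow> nat list list" where
  "stratum_search s V =
     labelings e8_adj [1..<Suc s] (search_plan (adjacency_matrix unit_apart V) (pinned_labels s V))"

definition open_labelings :: "nat \<Rightarrow> nat list list" where
  "open_labelings s = stratum_search s (stratum_list s)"

lemma set_open_labelings:
  assumes "s \<in> {3..8}"
  shows "set (open_labelings s) = {hs. open_labeling (adjacency_matrix unit_apart (stratum_list s)) [1..<Suc s] e8_adj hs \<and>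
      (\<forall>k<length (stratum_list s). hs ! k \<in> set (pinned_labels s (stratum_list s) ! k))}"
proof -
  let ?A = "adjacency_matrix unit_apart (stratum_list s)"
  have "simple_adjacency ?A"
    by (rule simple_adjacency_matrix) (simp_all add: unit_apart_irrefl unit_apart_sym)
  moreover have "\<forall>al\<in>set (pinned_labels s (stratum_list s)). set al \<subseteq> set [1..<Suc s]"
    using assms by (auto simp: pinned_labels_def)
  moreover have "length (pinned_labels s (stratum_list s)) = length ?A"
    by (simp add: pinned_labels_def adjacency_matrix_def)
  ultimately have "set (open_labelings s) = {hs. open_labeling ?A [1..<Suc s] e8_adj hs \<and>
      (\<forall>k<length ?A. hs ! k \<in> set (pinned_labels s (stratum_list s) ! k))}"
    unfolding open_labelings_def stratum_search_def using e8_adj_sym by (intro set_labelings_search_plan)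
  then show ?thesis
    by (simp add: adjacency_matrix_def)
qed

lemma good_h_iff_open_labelings:
  assumes s: "s \<in> {3..8}"
  shows "good_h s h \<longleftrightarrow> map (h \<circ> vec) (stratum_list s) \<in> set (open_labelings s)"
proof -
  let ?V = "stratum_list s"
  let ?hs = "map (h \<circ> vec) ?V"
  have stratum: "stratum s = set (map vec ?V)"
    using stratum_eq[of s] s by simp
  have dyn: "dyn_V s = set [1..<Suc s]" "dyn_E = e8_adj"
    by (auto simp: dyn_V_def dyn_E_def fun_eq_iff)
  have adj: "adjacency_matrix H_E (map vec ?V) = adjacency_matrix unit_apart ?V"
    unfolding adjacency_matrix_map adjacency_matrix_def
    by (simp add: H_E_vec length_stratum_list cong: map_cong)
  have om: "open_map (stratum s) H_E (dyn_V s) dyn_E h \<longleftrightarrow>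
      open_labeling (adjacency_matrix unit_apart ?V) [1..<Suc s] e8_adj ?hs"
    unfolding stratum dyn open_map_iff_open_labeling adj by simp
  have pin: "(\<forall>k<length ?V. ?hs ! k \<in> set (pinned_labels s ?V ! k)) \<longleftrightarrow> h (simple_root s) = s"
    if "\<forall>k<length ?V. ?hs ! k \<in> set [1..<Suc s]"
  proof -
    obtain k0 where k0: "k0 < length ?V" "?V ! k0 = unit_list s"
      using unit_list_mem_stratum_list[OF s] by (auto simp: in_set_conv_nth)
    have "simple_root s = vec (unit_list s)"
      using s by (simp add: simple_root_vec)
    then show ?thesis
      using that k0 by (auto simp: pinned_labels_def)
  qed
  have range: "\<forall>k<length ?V. ?hs ! k \<in> set [1..<Suc s]"
    if "open_labeling (adjacency_matrix unit_apart ?V) [1..<Suc s] e8_adj ?hs"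
    using that by (simp add: open_labeling_def adjacency_matrix_def)
  have "good_h s h \<longleftrightarrow> h (simple_root s) = s \<and> open_map (stratum s) H_E (dyn_V s) dyn_E h"
    by (auto simp: good_h_def open_map_def dyn_V_def)
  then show ?thesis
    unfolding set_open_labelings[OF s] om using pin range by blast
qed

lemma good_h_exists_unique:
  assumes s: "s \<in> {3..8}" and hs: "open_labelings s = [hs]"
  shows "\<exists>h. good_h s h \<and> (\<forall>h'. good_h s h' \<longrightarrow> (\<forall>\<beta>\<in>stratum s. h' \<beta> = h \<beta>))"
proof -
  let ?V = "stratum_list s"
  define h where "h \<beta> = the (map_of (zip (map vec ?V) hs) \<beta>)" for \<beta>
  have len: "length (map vec ?V) = length hs"
    using hs set_open_labelings[OF s] by (auto simp: open_labeling_def adjacency_matrix_def)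
  have dist: "distinct (map vec ?V)"
    using distinct_stratum_list length_stratum_list vec_inject by (auto simp: distinct_map inj_on_def)
  have "h (vec (?V ! i)) = hs ! i" if "i < length ?V" for i
    using map_of_zip_nth[OF len dist, of i] that len unfolding h_def by (metis length_map nth_map option.sel)
  then have h: "map (h \<circ> vec) ?V = hs"
    using len by (auto intro!: nth_equalityI)
  have "h' \<beta> = h \<beta>" if "good_h s h'" "\<beta> \<in> stratum s" for h' \<beta>
  proof -
    have "map (h' \<circ> vec) ?V = map (h \<circ> vec) ?V"
      using that(1) good_h_iff_open_labelings[OF s] hs h by simp
    then show ?thesis
      using that(2) stratum_eq[of s] s by (auto simp: map_eq_conv)
  qed
  moreover have "good_h s h"
    using good_h_iff_open_labelings[OF s] hs h by simp
  ultimately show ?thesis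
    by blast
qed

lemma open_labelings_counts:
  "length (open_labelings 3) = 1" "length (open_labelings 4) = 1" "length (open_labelings 5) = 1"
  "length (open_labelings 6) = 1" "length (open_labelings 7) = 1" "open_labelings 8 = []"
  by (simp_all add: open_labelings_def stratum_search_def stratum_list_def e8_positive_roots_iterates
      iterates_numeral raise_level_def unit_list_def pinned_labels_def adjacency_matrix_def
      search_plan_def completions_def completion_step_def labelings_def extensions_def
      e8_adj_iff_dynkin_neighbours dynkin_neighbours_def upt_rec)

theorem mainTheorem12:
  shows "(\<forall>s\<in>{3..7}. \<exists>h. good_h s h \<and>
            (\<forall>h'. good_h s h' \<longrightarrow> (\<forall>\<beta>\<in>stratum s. h' \<beta> = h \<beta>)))
         \<and> \<not> (\<exists>h. good_h 8 h)"
proof -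
  have "\<exists>h. good_h s h \<and> (\<forall>h'. good_h s h' \<longrightarrow> (\<forall>\<beta>\<in>stratum s. h' \<beta> = h \<beta>))"
    if s: "s \<in> {3..7}" for s
  proof -
    from s have "length (open_labelings s) = 1"
      using open_labelings_counts by (auto simp: atLeastAtMost_iff le_Suc_eq eval_nat_numeral)
    then obtain hs where "open_labelings s = [hs]"
      by (auto simp: length_Suc_conv)
    with s show ?thesis
      by (intro good_h_exists_unique) auto
  qed
  moreover have "\<not> (\<exists>h. good_h 8 h)"
    using good_h_iff_open_labelings[of 8] open_labelings_counts(6) by simp
  ultimately show ?thesis
    by blast
qed

end
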